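(* Assume the setting described in the context and suppose the event $\mathcal{E}$ holds. There is an absolute constant $C>0$ such that the following holds. Let $k'\ge k$ be an integer, let $\mathbf{w}\in\mathbb{R}^n$ be a unit vector with at most $k'$ nonzero entries, set $\alpha:=|\langle\mathbf{w},\mathbf{v}\rangle|$ and $\mathbf{y}:=\hat{\boldsymbol{\Gamma}}\mathbf{w}$ (so $\mathbf{y}=\theta\langle\mathbf{w},\mathbf{v}\rangle\mathbf{v}+\mathbf{W}\mathbf{w}$), and define $$ b:=C(1+\theta)\sqrt{\frac{k'\log n}{m}}. $$ Whenever $\theta\alpha>2b$, $$ \cos\angle\Big(\frac{\mathcal{H}_{k'}(\mathbf{y})}{\|\mathcal{H}_{k'}(\mathbf{y})\|_2},\mathbf{v}\Big)\ \ge\ \frac{\theta\alpha-2b}{\theta\alpha+b}\qquad\text{and}\qquad \sin\angle\Big(\frac{\mathcal{H}_{k'}(\mathbf{y})}{\|\mathcal{H}_{k'}(\mathbf{y})\|_2},\mathbf{v}\Big)\ \le\ \frac{5b}{\theta\alpha-2b}. $$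
   Context: Let $n\ge 2$, $m\ge1$, $\theta>0$, $k\in[n]$; $\mathbf{v}\in\mathbb{R}^n$ a unit vector with at most $k$ nonzero entries; $\mathbf{x}_1,\dots,\mathbf{x}_m$ i.i.d. $\mathcal{N}(\mathbf{0},\mathbf{I}_n+\theta\mathbf{v}\mathbf{v}^\top)$; $\hat{\boldsymbol{\Gamma}}=\frac1m\sum_i\mathbf{x}_i\mathbf{x}_i^\top-\mathbf{I}_n$; $\mathbf{W}=\hat{\boldsymbol{\Gamma}}-\theta\mathbf{v}\mathbf{v}^\top$. $\|\cdot\|_2$ is the Euclidean/spectral norm and $\mathbf{W}_{S,S}$ a principal submatrix. $\mathcal{H}_{k'}$ keeps the $k'$ largest-magnitude entries of a vector and zeroes the rest. For unit vectors, $\cos\angle(\mathbf{a},\mathbf{b})=|\langle\mathbf{a},\mathbf{b}\rangle|$ and $\sin\angle(\mathbf{a},\mathbf{b})=\sqrt{1-\langle\mathbf{a},\mathbf{b}\rangle^2}$. Fix an absolute constant $C_0>0$; $\mathcal{E}$ is the event that $\|\mathbf{W}_{S,S}\|_2\le C_0(1+\theta)\sqrt{|S|\log n/m}$ for all nonempty $S\subseteq[n]$. Absolute constants do not depend on $n,m,k,k',\theta,\mathbf{v},\mathbf{w}$. *)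

theory Defs
  imports "HOL-Analysis.Analysis"
begin

text \<open>Vectors in R^n are functions nat => real, only indices < n matter;
  n x n matrices are functions nat => nat => real.\<close>

definition vinner :: "nat \<Rightarrow> (nat \<Rightarrow> real) \<Rightarrow> (nat \<Rightarrow> real) \<Rightarrow> real" where
  "vinner n x y = (\<Sum>i<n. x i * y i)"

definition vnorm :: "nat \<Rightarrow> (nat \<Rightarrow> real) \<Rightarrow> real" where
  "vnorm n x = sqrt (\<Sum>i<n. (x i)\<^sup>2)"

definition nnz :: "nat \<Rightarrow> (nat \<Rightarrow> real) \<Rightarrow> nat" where
  "nnz n x = card {i. i < n \<and> x i \<noteq> 0}"

definition matvec :: "nat \<Rightarrow> (nat \<Rightarrow> nat \<Rightarrow> real) \<Rightarrow> (nat \<Rightarrow> real) \<Rightarrow> nat \<Rightarrow> real" where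
  "matvec n A x = (\<lambda>i. \<Sum>j<n. A i j * x j)"

text \<open>Sample x_l has coordinates X l i (l < m, i < n).
  Gamma_hat = (1/m) sum_l x_l x_l^T - I.\<close>
definition Gamma_hat :: "nat \<Rightarrow> nat \<Rightarrow> (nat \<Rightarrow> nat \<Rightarrow> real) \<Rightarrow> nat \<Rightarrow> nat \<Rightarrow> real" where
  "Gamma_hat n m X = (\<lambda>i j. (1 / real m) * (\<Sum>l<m. X l i * X l j) - (if i = j then 1 else 0))"

definition noise_W :: "nat \<Rightarrow> nat \<Rightarrow> (nat \<Rightarrow> nat \<Rightarrow> real) \<Rightarrow> real \<Rightarrow> (nat \<Rightarrow> real) \<Rightarrow> nat \<Rightarrow> nat \<Rightarrow> real" where
  "noise_W n m X \<theta> v = (\<lambda>i j. Gamma_hat n m X i j - \<theta> * v i * v j)"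

definition sub_opnorm :: "(nat \<Rightarrow> nat \<Rightarrow> real) \<Rightarrow> nat set \<Rightarrow> real" where
  "sub_opnorm A S = Sup {sqrt (\<Sum>i\<in>S. (\<Sum>j\<in>S. A i j * x j)\<^sup>2) | x. (\<Sum>j\<in>S. (x j)\<^sup>2) \<le> 1}"

definition event_E :: "real \<Rightarrow> nat \<Rightarrow> nat \<Rightarrow> real \<Rightarrow> (nat \<Rightarrow> real) \<Rightarrow> (nat \<Rightarrow> nat \<Rightarrow> real) \<Rightarrow> bool" where
  "event_E C0 n m \<theta> v X \<longleftrightarrow>
     (\<forall>S. S \<subseteq> {..<n} \<and> S \<noteq> {} \<longrightarrow>
        sub_opnorm (noise_W n m X \<theta> v) S \<le> C0 * (1 + \<theta>) * sqrt (real (card S) * ln (real n) / real m))"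

text \<open>z is a hard thresholding H_k(y): keeps min(k,n) largest-magnitude entries
  (any tie-breaking), zeroes the rest.\<close>
definition is_hard_threshold :: "nat \<Rightarrow> nat \<Rightarrow> (nat \<Rightarrow> real) \<Rightarrow> (nat \<Rightarrow> real) \<Rightarrow> bool" where
  "is_hard_threshold n k y z \<longleftrightarrow>
     (\<exists>S. S \<subseteq> {..<n} \<and> card S = min k n \<and>
        (\<forall>i\<in>S. \<forall>j\<in>{..<n} - S. \<bar>y j\<bar> \<le> \<bar>y i\<bar>) \<and>
        (\<forall>i<n. z i = (if i \<in> S then y i else 0)))"

end

theory Submission
  imports Defs
begin

text \<open>Write \<open>y = a v + e\<close> with \<open>a = \<theta>\<langle>w,v\<rangle>\<close> and \<open>e = W w\<close>. On any set of at most
  \<open>3k'\<close> coordinates containing the support of \<open>w\<close>, the event \<open>E\<close> bounds the norm of \<open>e\<close> by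
  \<open>\<epsilon> = C0 (1 + \<theta>) sqrt (3k' log n / m)\<close>. The kept set \<open>S\<close> of the thresholding is at least
  as large as the support \<open>V\<close> of \<open>v\<close> and every kept entry of \<open>y\<close> dominates every
  discarded one, so the discarded signal is controlled by noise alone:
  \<open>|a| \<parallel>v_(V-S)\<parallel> \<le> \<parallel>e_(S-V)\<parallel> + \<parallel>e_(V-S)\<parallel> \<le> 2\<epsilon>\<close>. Hence \<open>z = H(y)\<close> lies within
  \<open>sqrt 5 \<epsilon> \<le> b\<close> of \<open>a v\<close> (for \<open>C = 4 C0\<close>), and any vector within distance \<open>\<delta> < |a|\<close>
  of \<open>a v\<close> has cosine at least \<open>(|a| - \<delta>) / (|a| + \<delta>)\<close> and sine at most
  \<open>\<delta> / (|a| - \<delta>)\<close> with the unit vector \<open>v\<close>.\<close>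

lemma ln_of_nat_nonneg: "0 \<le> ln (real n)"
  by (cases "n = 0") auto

lemma L2_set_power2: "(L2_set f A)\<^sup>2 = (\<Sum>i\<in>A. (f i)\<^sup>2)"
  unfolding L2_set_def by (simp add: sum_nonneg)

lemma L2_set_uminus [simp]: "L2_set (\<lambda>i. - f i) A = L2_set f A"
  unfolding L2_set_def by simp

lemma L2_set_scale: "L2_set (\<lambda>i. c * f i) A = \<bar>c\<bar> * L2_set f A"
  unfolding L2_set_def by (simp add: power_mult_distrib real_sqrt_mult flip: sum_distrib_left)

lemma L2_set_mono2:
  assumes "finite B" "A \<subseteq> B"
  shows "L2_set f A \<le> L2_set f B"
  unfolding L2_set_def using assms by (intro real_sqrt_le_mono sum_mono2) auto

lemma abs_sum_mult_le_L2_set: "\<bar>\<Sum>i\<in>A. f i * g i\<bar> \<le> L2_set f A * L2_set g A"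
  by (rule order_trans[OF sum_abs]) (simp add: abs_mult L2_set_mult_ineq)

lemma L2_set_le_of_abs_dominated:
  assumes "finite P" "finite Q" "card P \<le> card Q"
    and dom: "\<And>i j. i \<in> Q \<Longrightarrow> j \<in> P \<Longrightarrow> \<bar>f j\<bar> \<le> \<bar>f i\<bar>"
  shows "L2_set f P \<le> L2_set f Q"
proof (cases "Q = {}")
  case True
  then show ?thesis using assms(1,3) by simp
next
  case False
  define \<mu> where "\<mu> = Min ((\<lambda>i. \<bar>f i\<bar>) ` Q)"
  have "\<mu> \<in> (\<lambda>i. \<bar>f i\<bar>) ` Q"
    unfolding \<mu>_def using assms(2) False by (intro Min_in) auto
  then obtain i0 where "i0 \<in> Q" "\<mu> = \<bar>f i0\<bar>" by auto
  have "(\<Sum>j\<in>P. (f j)\<^sup>2) \<le> card P * \<mu>\<^sup>2"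
    using dom[OF \<open>i0 \<in> Q\<close>] \<open>\<mu> = \<bar>f i0\<bar>\<close>
    by (intro sum_bounded_above) (metis abs_ge_zero power2_abs power_mono)
  also have "\<dots> \<le> card Q * \<mu>\<^sup>2"
    using assms(3) by (simp add: mult_right_mono)
  also have "\<dots> \<le> (\<Sum>i\<in>Q. (f i)\<^sup>2)"
    using assms(2) \<open>\<mu> = \<bar>f i0\<bar>\<close>
    by (intro sum_bounded_below) (metis Min_le \<mu>_def abs_ge_zero finite_imageI image_eqI power2_abs power_mono)
  finally show ?thesis
    unfolding L2_set_def by (rule real_sqrt_le_mono)
qed

lemma top_set_tail_bound:
  assumes "finite S" "finite V" "card V \<le> card S"
    and top: "\<And>i j. i \<in> S \<Longrightarrow> j \<in> V - S \<Longrightarrow> \<bar>y j\<bar> \<le> \<bar>y i\<bar>"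
    and y: "\<And>i. y i = a * v i + e i"
    and v0: "\<And>i. i \<in> S - V \<Longrightarrow> v i = 0"
  shows "\<bar>a\<bar> * L2_set v (V - S) \<le> L2_set e (S - V) + L2_set e (V - S)"
proof -
  have "card (V - S) \<le> card (S - V)"
    using assms(1-3) card_Diff_subset_Int[of V S] card_Diff_subset_Int[of S V]
    by (simp add: Int_commute)
  then have "L2_set y (V - S) \<le> L2_set y (S - V)"
    using assms(1,2) top by (intro L2_set_le_of_abs_dominated) auto
  also have "L2_set y (S - V) = L2_set e (S - V)"
    using y v0 by (intro L2_set_cong) auto
  finally have yVS: "L2_set y (V - S) \<le> L2_set e (S - V)" .
  have "\<bar>a\<bar> * L2_set v (V - S) = L2_set (\<lambda>i. y i + - e i) (V - S)"
    by (simp add: y flip: L2_set_scale)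
  also have "\<dots> \<le> L2_set y (V - S) + L2_set e (V - S)"
    using L2_set_triangle_ineq[of y "\<lambda>i. - e i" "V - S"] by simp
  finally show ?thesis using yVS by linarith
qed

lemma vnorm_eq_L2_set: "vnorm n x = L2_set x {..<n}"
  by (simp add: vnorm_def L2_set_def)

lemma matvec_Gamma_hat_eq:
  "matvec n (Gamma_hat n m X) w i = \<theta> * vinner n w v * v i + matvec n (noise_W n m X \<theta> v) w i"
  by (simp add: matvec_def vinner_def noise_W_def sum_subtractf sum_distrib_left algebra_simps)

lemma L2_set_matvec_le_sub_opnorm:
  assumes "finite S" "L2_set x S \<le> 1"
  shows "L2_set (\<lambda>i. \<Sum>j\<in>S. A i j * x j) S \<le> sub_opnorm A S"
proof -
  have bound: "L2_set (\<lambda>i. \<Sum>j\<in>S. A i j * x' j) S \<le> (\<Sum>i\<in>S. L2_set (A i) S)"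
    if "L2_set x' S \<le> 1" for x'
  proof -
    have "L2_set (\<lambda>i. \<Sum>j\<in>S. A i j * x' j) S \<le> (\<Sum>i\<in>S. \<bar>\<Sum>j\<in>S. A i j * x' j\<bar>)"
      by (rule L2_set_le_sum_abs)
    also have "\<dots> \<le> (\<Sum>i\<in>S. L2_set (A i) S)"
    proof (rule sum_mono)
      fix i
      show "\<bar>\<Sum>j\<in>S. A i j * x' j\<bar> \<le> L2_set (A i) S"
        using abs_sum_mult_le_L2_set[where f = "A i" and g = x' and A = S] that
        by (meson L2_set_nonneg mult_left_le order_trans)
    qed
    finally show ?thesis .
  qed
  show ?thesis
    unfolding sub_opnorm_def using assms(2) bound
    by (intro cSup_upper bdd_aboveI[where M = "\<Sum>i\<in>S. L2_set (A i) S"]) (auto simp: L2_set_def)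
qed

lemma event_E_sparse_noise_le:
  assumes E: "event_E C0 n m \<theta> v X" and "0 \<le> C0" "0 \<le> \<theta>"
    and w: "vnorm n w = 1" "nnz n w \<le> k"
    and U: "U \<subseteq> {..<n}" "card U \<le> 2 * k"
  shows "L2_set (matvec n (noise_W n m X \<theta> v) w) U
    \<le> C0 * (1 + \<theta>) * sqrt (3 * real k * ln (real n) / real m)"
proof -
  define W where "W = noise_W n m X \<theta> v"
  define T where "T = {j. j < n \<and> w j \<noteq> 0}"
  have w0: "w j = 0" if "j < n" "j \<notin> T" for j
    using that by (simp add: T_def)
  have UT: "U \<union> T \<subseteq> {..<n}" "finite (U \<union> T)"
    using U(1) finite_subset by (auto simp: T_def)
  have "T \<noteq> {}"
    using w w0 by (auto simp: vnorm_eq_L2_set L2_set_0')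
  have card_UT: "card (U \<union> T) \<le> 3 * k"
    using card_Un_le[of U T] U(2) w(2) by (simp add: nnz_def T_def)
  have matvec_UT: "matvec n W w = (\<lambda>i. \<Sum>j\<in>U \<union> T. W i j * w j)"
    unfolding matvec_def using UT w0 by (intro ext sum.mono_neutral_right) auto
  have w_UT: "L2_set w (U \<union> T) = 1"
  proof -
    have "(\<Sum>j<n. (w j)\<^sup>2) = (\<Sum>j\<in>U \<union> T. (w j)\<^sup>2)"
      using UT w0 by (intro sum.mono_neutral_right) auto
    then show ?thesis
      using w(1) by (simp add: vnorm_def L2_set_def)
  qed
  have "L2_set (matvec n W w) U \<le> sub_opnorm W (U \<union> T)"
    using L2_set_mono2[OF UT(2) Un_upper1, of "matvec n W w"]
      L2_set_matvec_le_sub_opnorm[OF UT(2) eq_refl[OF w_UT], where A = W]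
    unfolding matvec_UT by linarith
  also have "\<dots> \<le> C0 * (1 + \<theta>) * sqrt (real (card (U \<union> T)) * ln (real n) / real m)"
    using E UT(1) \<open>T \<noteq> {}\<close> unfolding event_E_def W_def by blast
  also have "\<dots> \<le> C0 * (1 + \<theta>) * sqrt (3 * real k * ln (real n) / real m)"
  proof -
    have "real (card (U \<union> T)) * ln (real n) \<le> 3 * real k * ln (real n)"
      using card_UT by (intro mult_right_mono) (auto simp: ln_of_nat_nonneg)
    then show ?thesis
      using assms(2,3) by (intro mult_left_mono real_sqrt_le_mono divide_right_mono) auto
  qed
  finally show ?thesis by (simp add: W_def)
qed

lemma power2_vnorm_restrict_minus:
  assumes "S \<subseteq> {..<n}" "V \<subseteq> {..<n}"
    and z: "\<And>i. i < n \<Longrightarrow> z i = (if i \<in> S then y i else 0)"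
    and y: "\<And>i. y i = a * v i + e i"
    and v0: "\<And>i. i < n \<Longrightarrow> i \<notin> V \<Longrightarrow> v i = 0"
  shows "(vnorm n (\<lambda>i. z i - a * v i))\<^sup>2 = (L2_set e S)\<^sup>2 + (\<bar>a\<bar> * L2_set v (V - S))\<^sup>2"
proof -
  have "(vnorm n (\<lambda>i. z i - a * v i))\<^sup>2
      = (\<Sum>i\<in>S. (e i)\<^sup>2) + (\<Sum>i\<in>{..<n} - S. (a * v i)\<^sup>2)"
    using assms(1) z sum.subset_diff[of S "{..<n}" "\<lambda>i. (z i - a * v i)\<^sup>2"]
    by (simp add: vnorm_eq_L2_set L2_set_power2 y subset_iff)
  also have "(\<Sum>i\<in>{..<n} - S. (a * v i)\<^sup>2) = (\<Sum>i\<in>V - S. (a * v i)\<^sup>2)"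
    using assms(2) v0 by (intro sum.mono_neutral_right) auto
  finally show ?thesis
    by (simp add: L2_set_power2 flip: L2_set_scale)
qed

lemma hard_threshold_dist_le:
  assumes thr: "is_hard_threshold n k y z" and v: "nnz n v \<le> k"
    and y: "\<And>i. y i = a * v i + e i"
    and noise: "\<And>U. U \<subseteq> {..<n} \<Longrightarrow> card U \<le> 2 * k \<Longrightarrow> L2_set e U \<le> \<epsilon>"
  shows "vnorm n (\<lambda>i. z i - a * v i) \<le> sqrt 5 * \<epsilon>"
proof -
  obtain S where S: "S \<subseteq> {..<n}" "card S = min k n"
      "\<forall>i\<in>S. \<forall>j\<in>{..<n} - S. \<bar>y j\<bar> \<le> \<bar>y i\<bar>"
      "\<forall>i<n. z i = (if i \<in> S then y i else 0)"
    using thr unfolding is_hard_threshold_def by blast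
  define V where "V = {i. i < n \<and> v i \<noteq> 0}"
  have V_sub: "V \<subseteq> {..<n}"
    by (auto simp: V_def)
  have fin: "finite S" "finite V"
    using S(1) V_sub finite_subset by blast+
  have v0: "v i = 0" if "i < n" "i \<notin> V" for i
    using that by (simp add: V_def)
  have "card V \<le> k"
    using v by (simp add: nnz_def V_def)
  moreover have "card V \<le> n"
    using card_mono[OF _ V_sub] by simp
  ultimately have "card V \<le> card S"
    using S(2) by simp
  then have "\<bar>a\<bar> * L2_set v (V - S) \<le> L2_set e (S - V) + L2_set e (V - S)"
  proof (rule top_set_tail_bound[OF fin])
    show "\<bar>y j\<bar> \<le> \<bar>y i\<bar>" if "i \<in> S" "j \<in> V - S" for i j
      using S(3) V_sub that by blast
    show "y i = a * v i + e i" for i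
      by (rule y)
    show "v i = 0" if "i \<in> S - V" for i
      using S(1) v0 that by blast
  qed
  also have "\<dots> \<le> \<epsilon> + \<epsilon>"
    using S(1,2) V_sub \<open>card V \<le> k\<close> card_mono[OF fin(1), of "S - V"] card_mono[OF fin(2), of "V - S"]
    by (intro add_mono noise) auto
  finally have tail: "\<bar>a\<bar> * L2_set v (V - S) \<le> 2 * \<epsilon>" by simp
  have head: "L2_set e S \<le> \<epsilon>"
    using S(1,2) by (intro noise) auto
  have "0 \<le> \<epsilon>"
    using noise[of "{}"] by simp
  have "(vnorm n (\<lambda>i. z i - a * v i))\<^sup>2 = (L2_set e S)\<^sup>2 + (\<bar>a\<bar> * L2_set v (V - S))\<^sup>2"
    using S(1,4) V_sub y v0 by (intro power2_vnorm_restrict_minus) auto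
  also have "\<dots> \<le> \<epsilon>\<^sup>2 + (2 * \<epsilon>)\<^sup>2"
    using head tail by (intro add_mono power_mono) auto
  also have "\<dots> = (sqrt 5 * \<epsilon>)\<^sup>2"
    by (simp add: power_mult_distrib)
  finally show ?thesis
    by (rule power2_le_imp_le) (simp add: \<open>0 \<le> \<epsilon>\<close>)
qed

lemma angle_bounds_of_estimates:
  fixes A \<delta> c Z :: real
  assumes "0 \<le> \<delta>" "\<delta> < A" "A - \<delta> \<le> \<bar>c\<bar>" "\<bar>c\<bar> \<le> Z" "Z \<le> A + \<delta>" "Z\<^sup>2 - c\<^sup>2 \<le> \<delta>\<^sup>2"
  shows "(A - \<delta>) / (A + \<delta>) \<le> \<bar>c / Z\<bar>" and "sqrt (1 - (c / Z)\<^sup>2) \<le> \<delta> / (A - \<delta>)"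
proof -
  have "0 < Z"
    using assms(2-4) by linarith
  then show "(A - \<delta>) / (A + \<delta>) \<le> \<bar>c / Z\<bar>"
    using assms by (simp add: frac_le)
  have "1 - (c / Z)\<^sup>2 = (Z\<^sup>2 - c\<^sup>2) / Z\<^sup>2"
    using \<open>0 < Z\<close> by (simp add: field_simps)
  also have "\<dots> \<le> (\<delta> / Z)\<^sup>2"
    using assms(6) by (simp add: power_divide divide_right_mono)
  finally have "sqrt (1 - (c / Z)\<^sup>2) \<le> \<delta> / Z"
    using \<open>0 < Z\<close> assms(1) by (simp add: real_le_lsqrt real_sqrt_le_iff)
  also have "\<dots> \<le> \<delta> / (A - \<delta>)"
    using assms(1-4) by (intro divide_left_mono) auto
  finally show "sqrt (1 - (c / Z)\<^sup>2) \<le> \<delta> / (A - \<delta>)" .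
qed

lemma perturbation_estimates:
  assumes v: "vnorm n v = 1" and d: "vnorm n (\<lambda>i. z i - a * v i) \<le> \<delta>"
  shows "\<bar>a\<bar> - \<delta> \<le> \<bar>vinner n z v\<bar>" and "\<bar>vinner n z v\<bar> \<le> vnorm n z"
    and "vnorm n z \<le> \<bar>a\<bar> + \<delta>" and "(vnorm n z)\<^sup>2 - (vinner n z v)\<^sup>2 \<le> \<delta>\<^sup>2"
proof -
  define d where "d = (\<lambda>i. z i - a * v i)"
  define p where "p = (\<Sum>i<n. d i * v i)"
  have z: "z = (\<lambda>i. a * v i + d i)"
    by (simp add: d_def)
  have v1: "(\<Sum>i<n. (v i)\<^sup>2) = 1" and "L2_set v {..<n} = 1"
    using v by (simp_all add: vnorm_def L2_set_def)
  have "L2_set d {..<n} \<le> \<delta>"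
    using d by (simp add: d_def vnorm_eq_L2_set)
  have c: "vinner n z v = a + p"
    using v1 by (simp add: z vinner_def p_def sum.distrib algebra_simps power2_eq_square flip: sum_distrib_left)
  have "\<bar>p\<bar> \<le> \<delta>"
    using abs_sum_mult_le_L2_set[where f = d and g = v and A = "{..<n}"] \<open>L2_set v {..<n} = 1\<close> \<open>L2_set d {..<n} \<le> \<delta>\<close>
    by (simp add: p_def)
  then show "\<bar>a\<bar> - \<delta> \<le> \<bar>vinner n z v\<bar>"
    using c by linarith
  show "\<bar>vinner n z v\<bar> \<le> vnorm n z"
    using abs_sum_mult_le_L2_set[where f = z and g = v and A = "{..<n}"] \<open>L2_set v {..<n} = 1\<close>
    by (simp add: vinner_def vnorm_eq_L2_set)
  have "vnorm n z \<le> L2_set (\<lambda>i. a * v i) {..<n} + L2_set d {..<n}"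
    unfolding vnorm_eq_L2_set z by (rule L2_set_triangle_ineq)
  then show "vnorm n z \<le> \<bar>a\<bar> + \<delta>"
    using \<open>L2_set v {..<n} = 1\<close> \<open>L2_set d {..<n} \<le> \<delta>\<close> by (simp add: L2_set_scale)
  have "(vnorm n z)\<^sup>2 = a\<^sup>2 * (\<Sum>i<n. (v i)\<^sup>2) + 2 * a * p + (L2_set d {..<n})\<^sup>2"
    by (simp add: vnorm_eq_L2_set L2_set_power2 z power2_sum p_def sum.distrib
        sum_distrib_left power_mult_distrib algebra_simps)
  then have "(vnorm n z)\<^sup>2 - (vinner n z v)\<^sup>2 \<le> (L2_set d {..<n})\<^sup>2"
    using v1 by (simp add: c power2_sum)
  also have "\<dots> \<le> \<delta>\<^sup>2"
    using \<open>L2_set d {..<n} \<le> \<delta>\<close> by (simp add: power_mono)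
  finally show "(vnorm n z)\<^sup>2 - (vinner n z v)\<^sup>2 \<le> \<delta>\<^sup>2" .
qed

lemma vinner_divide_left: "vinner n (\<lambda>i. z i / r) v = vinner n z v / r"
  by (simp add: vinner_def sum_divide_distrib)

lemma hard_threshold_step_dist_le:
  assumes "0 \<le> C0" "0 < \<theta>" "k \<le> k'" "nnz n v \<le> k"
    and E: "event_E C0 n m \<theta> v X"
    and w: "vnorm n w = 1" "nnz n w \<le> k'"
    and thr: "is_hard_threshold n k' (matvec n (Gamma_hat n m X) w) z"
  shows "vnorm n (\<lambda>i. z i - \<theta> * vinner n w v * v i)
    \<le> 4 * C0 * (1 + \<theta>) * sqrt (real k' * ln (real n) / real m)"
proof -
  define q where "q = real k' * ln (real n) / real m"
  define \<epsilon> where "\<epsilon> = C0 * (1 + \<theta>) * sqrt (3 * q)"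
  have "0 \<le> q"
    by (simp add: q_def ln_of_nat_nonneg)
  have "vnorm n (\<lambda>i. z i - \<theta> * vinner n w v * v i) \<le> sqrt 5 * \<epsilon>"
  proof (rule hard_threshold_dist_le[OF thr])
    show "nnz n v \<le> k'"
      using assms(3,4) by simp
    show "matvec n (Gamma_hat n m X) w i
        = \<theta> * vinner n w v * v i + matvec n (noise_W n m X \<theta> v) w i" for i
      by (rule matvec_Gamma_hat_eq)
    show "L2_set (matvec n (noise_W n m X \<theta> v) w) U \<le> \<epsilon>"
      if "U \<subseteq> {..<n}" "card U \<le> 2 * k'" for U
      using event_E_sparse_noise_le[OF E \<open>0 \<le> C0\<close> _ w that] \<open>0 < \<theta>\<close>
      by (simp add: \<epsilon>_def q_def mult.assoc)
  qed
  also have "sqrt 5 * \<epsilon> \<le> C0 * (1 + \<theta>) * (4 * sqrt q)"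
  proof -
    have "sqrt 5 * sqrt (3 * q) \<le> 4 * sqrt q"
      using \<open>0 \<le> q\<close> real_sqrt_le_mono[of "15 * q" "16 * q"]
      by (simp add: real_sqrt_mult[symmetric] real_sqrt_mult[of 16])
    then have "C0 * (1 + \<theta>) * (sqrt 5 * sqrt (3 * q)) \<le> C0 * (1 + \<theta>) * (4 * sqrt q)"
      using assms(1,2) by (intro mult_left_mono) auto
    then show ?thesis
      by (simp add: \<epsilon>_def mult_ac)
  qed
  also have "\<dots> = 4 * C0 * (1 + \<theta>) * sqrt (real k' * ln (real n) / real m)"
    by (simp add: q_def mult_ac)
  finally show ?thesis .
qed

lemma hard_threshold_power_step_angle:
  assumes "0 \<le> C0" "0 < \<theta>" "k \<le> k'"
    and v: "vnorm n v = 1" "nnz n v \<le> k"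
    and E: "event_E C0 n m \<theta> v X"
    and w: "vnorm n w = 1" "nnz n w \<le> k'"
    and thr: "is_hard_threshold n k' (matvec n (Gamma_hat n m X) w) z"
    and b: "b = 4 * C0 * (1 + \<theta>) * sqrt (real k' * ln (real n) / real m)"
    and gap: "2 * b < \<theta> * \<bar>vinner n w v\<bar>"
  shows "(\<theta> * \<bar>vinner n w v\<bar> - 2 * b) / (\<theta> * \<bar>vinner n w v\<bar> + b)
      \<le> \<bar>vinner n (\<lambda>i. z i / vnorm n z) v\<bar>"
    and "sqrt (1 - (vinner n (\<lambda>i. z i / vnorm n z) v)\<^sup>2) \<le> 5 * b / (\<theta> * \<bar>vinner n w v\<bar> - 2 * b)"
proof -
  define a where "a = \<theta> * vinner n w v"
  have dist: "vnorm n (\<lambda>i. z i - a * v i) \<le> b"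
    using hard_threshold_step_dist_le[OF assms(1-3) v(2) E w thr] by (simp add: a_def b)
  then have "0 \<le> b"
    by (metis vnorm_eq_L2_set L2_set_nonneg order_trans)
  have A: "\<bar>a\<bar> = \<theta> * \<bar>vinner n w v\<bar>"
    using \<open>0 < \<theta>\<close> by (simp add: a_def abs_mult)
  then have "b < \<bar>a\<bar>"
    using gap \<open>0 \<le> b\<close> by linarith
  note bounds = angle_bounds_of_estimates[OF \<open>0 \<le> b\<close> \<open>b < \<bar>a\<bar>\<close> perturbation_estimates[OF v(1) dist]]
  have "(\<bar>a\<bar> - 2 * b) / (\<bar>a\<bar> + b) \<le> (\<bar>a\<bar> - b) / (\<bar>a\<bar> + b)"
    using \<open>0 \<le> b\<close> \<open>b < \<bar>a\<bar>\<close> by (intro divide_right_mono) auto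
  with bounds(1) show "(\<theta> * \<bar>vinner n w v\<bar> - 2 * b) / (\<theta> * \<bar>vinner n w v\<bar> + b)
      \<le> \<bar>vinner n (\<lambda>i. z i / vnorm n z) v\<bar>"
    by (simp add: A vinner_divide_left)
  have "b / (\<bar>a\<bar> - b) \<le> 5 * b / (\<bar>a\<bar> - 2 * b)"
    using \<open>0 \<le> b\<close> gap A by (intro frac_le) auto
  with bounds(2) show "sqrt (1 - (vinner n (\<lambda>i. z i / vnorm n z) v)\<^sup>2) \<le> 5 * b / (\<theta> * \<bar>vinner n w v\<bar> - 2 * b)"
    by (simp add: A vinner_divide_left)
qed

theorem proposition6:
  fixes C0 :: real
  assumes "C0 > 0"
  shows "\<exists>C>0. \<forall>(n::nat) (m::nat) (k::nat) (k'::nat) (\<theta>::real) (v::nat \<Rightarrow> real)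
            (X::nat \<Rightarrow> nat \<Rightarrow> real) (w::nat \<Rightarrow> real) (z::nat \<Rightarrow> real).
    n \<ge> 2 \<and> m \<ge> 1 \<and> \<theta> > 0 \<and> 1 \<le> k \<and> k \<le> n \<and> k \<le> k' \<and>
    vnorm n v = 1 \<and> nnz n v \<le> k \<and>
    event_E C0 n m \<theta> v X \<and>
    vnorm n w = 1 \<and> nnz n w \<le> k' \<and>
    is_hard_threshold n k' (matvec n (Gamma_hat n m X) w) z \<and>
    \<theta> * \<bar>vinner n w v\<bar> > 2 * (C * (1 + \<theta>) * sqrt (real k' * ln (real n) / real m))
    \<longrightarrow>
    (let \<alpha> = \<bar>vinner n w v\<bar>;
         b = C * (1 + \<theta>) * sqrt (real k' * ln (real n) / real m);
         u = (\<lambda>i. z i / vnorm n z)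
     in \<bar>vinner n u v\<bar> \<ge> (\<theta> * \<alpha> - 2 * b) / (\<theta> * \<alpha> + b) \<and>
        sqrt (1 - (vinner n u v)\<^sup>2) \<le> 5 * b / (\<theta> * \<alpha> - 2 * b))"
proof (intro exI[of _ "4 * C0"] conjI allI impI)
  show "0 < 4 * C0"
    using assms by simp
qed (unfold Let_def, elim conjE, rule conjI;
    rule hard_threshold_power_step_angle[OF less_imp_le[OF assms] _ _ _ _ _ _ _ _ refl]; assumption)

end
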